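(* Let $\Omega_0\subset\mathbb{R}^3$ be a bounded Lipschitz domain with outward unit normal $N$, whose boundary is split as $\partial\Omega_0=\Sigma_D\cup\Sigma_N$ (disjoint). Let $\rho_0>0$ and let $C=2\mu\,\mathcal{I}_s+\lambda\,I\otimes I$ with $\mu>0$, $3\lambda+2\mu>0$. Consider the system $\rho_0\dot v=\mathrm{Div}(F\cdot S)$, $C^{-1}:\dot S=\tfrac12(F^T\cdot\mathrm{Grad}(v)+\mathrm{Grad}(v)^T\cdot F)$, $\dot F=\mathrm{Grad}(v)$ on $\Omega_0$ ($v$ vector-valued, $S$ symmetric-tensor-valued, $F$ tensor-valued), with Neumann condition $F\cdot S\cdot N=\bar\tau_0$ on $\Sigma_N$ and Dirichlet condition $v=\bar\nu$ on $\Sigma_D$, in the weak form: for all test functions $\delta v$ (vector), $\delta S$ (symmetric tensor), $\delta T$ (tensor), $$\int_{\Omega_0}\delta v\cdot\rho_0\dot v+(\mathrm{Grad}(\delta v)^T\cdot F):S\,d\Omega_0-\int_{\Sigma_D}\delta v\cdot F\cdot S\cdot N\,d\Sigma_D-\int_{\Sigma_N}\delta v\cdot\bar\tau_0\,d\Sigma_N=0,$$ $$\int_{\Omega_0}\delta S:C^{-1}:\dot S-\delta S:(F^T\cdot\mathrm{Grad}(v))\,d\Omega_0+\int_{\Sigma_D}(F\cdot\delta S\cdot N)\cdot v\,d\Sigma_D-\int_{\Sigma_D}(F\cdot\delta S\cdot N)\cdot\bar\nu\,d\Sigma_D=0,$$ $$\int_{\Omega_0}\delta T:\dot F-\delta T:\mathrm{Grad}(v)\,d\Omega_0=0.$$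 Apply a Galerkin discretization with trial and test functions from the same bases: $v=\sum_i\phi_i\hat v_i(t)$, $\delta v=\sum_i\phi_i\delta\hat v_i$; $S=\sum_j\psi_j\hat S_j(t)$, $\delta S=\sum_j\psi_j\delta\hat S_j$; $F=\sum_l\theta_l\hat F_l(t)$, $\delta T=\sum_l\theta_l\delta\hat T_l$; $\bar\tau_0=\sum_k\xi_k\hat\tau_{0,k}(t)$, $\bar\nu=\sum_m\zeta_m\hat\nu_m(t)$, where $\{\phi_i\}$ (vector fields), $\{\psi_j\}$ (symmetric tensor fields), $\{\theta_l\}$ (tensor fields) are linearly independent families of sufficiently regular functions. Define $M_v=[\int_{\Omega_0}\rho_0\phi_i\cdot\phi_{i'}]$, $M_S=[\int_{\Omega_0}\psi_j:C^{-1}:\psi_{j'}]$, $M_F=[\int_{\Omega_0}\theta_l:\theta_{l'}]$, $Z=[\int_{\Omega_0}\theta_l:\mathrm{Grad}(\phi_i)]_{l,i}$, $K(\hat F)=\big[\int_{\Omega_0}(\mathrm{Grad}(\phi_i)^T\cdot F):\psi_j\,d\Omega_0-\int_{\Sigma_D}\phi_i\cdot F\cdot\psi_j\cdot N\,d\Sigma_D\big]_{i,j}$, $G_\tau=[\int_{\Sigma_N}\phi_i\cdot\xi_k]_{i,k}$, $G_\nu(\hat F)=[\int_{\Sigma_D}(F\cdot\psi_j\cdot N)\cdot\zeta_m]_{j,m}$, with $F=\sum_l\theta_l\hat F_l$. Then the discretized weak form is the port-Hamiltonian state space model $$\begin{bmatrix}M_v&0&0\\0&M_S&0\\0&0&M_F\end{bmatrix}\begin{bmatrix}\dot{\hat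 v}\\ \dot{\hat S}\\ \dot{\hat F}\end{bmatrix}=\begin{bmatrix}0&-K(\hat F)&-Z^T\\ K(\hat F)^T&0&0\\ Z&0&0\end{bmatrix}\begin{bmatrix}\hat v\\ \hat S\\ 0\end{bmatrix}+\begin{bmatrix}G_\tau&0\\0&G_\nu(\hat F)\\0&0\end{bmatrix}\begin{bmatrix}\hat\tau_0\\ \hat\nu\end{bmatrix},\qquad y=\begin{bmatrix}G_\tau^T&0&0\\0&G_\nu(\hat F)^T&0\end{bmatrix}\begin{bmatrix}\hat v\\ \hat S\\ 0\end{bmatrix},$$ where the mass matrix is symmetric positive definite and the structure matrix is skew-symmetric, and with the quadratic Hamiltonian $\hat H=\tfrac12\hat v^TM_v\hat v+\tfrac12\hat S^TM_S\hat S$ the power balance $\frac{d}{dt}\hat H=\hat v^TG_\tau\hat\tau_0+\hat S^TG_\nu(\hat F)\hat\nu=y^T\begin{bmatrix}\hat\tau_0\\ \hat\nu\end{bmatrix}$ holds.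
   Context: Tensor conventions: $(A\cdot B)_{ij}=A_{ik}B_{kj}$, $A:B=A_{ij}B_{ij}$, $\mathrm{Grad}(w)_{ij}=\partial w_i/\partial X_j$, $\mathrm{Div}(A)_i=\partial A_{ij}/\partial X_j$ (summation over repeated indices), derivatives with respect to the material coordinate $X$. $I$ is the second-order identity, $\mathcal{I}_s$ the symmetric fourth-order identity, $(I\otimes I)_{ijkl}=\delta_{ij}\delta_{kl}$; $C^{-1}$ denotes the inverse of $C$ on symmetric tensors. A dot denotes time derivative. Matrices written $[\cdot]_{a,b}$ have row index $a$ and column index $b$; for square mass matrices $[\cdot]$ with indices $(i,i')$ etc. $\hat v,\hat S,\hat F,\hat\tau_0,\hat\nu$ are the coefficient vectors. *)

theory Defs
  imports "HOL-Analysis.Analysis"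
begin

definition ddot :: "real^'n^'m \<Rightarrow> real^'n^'m \<Rightarrow> real" where
  "ddot A B = (\<Sum>i\<in>UNIV. \<Sum>j\<in>UNIV. A$i$j * B$i$j)"

definition Grad :: "(real^3 \<Rightarrow> real^3) \<Rightarrow> real^3 \<Rightarrow> real^3^3" where
  "Grad w X = jacobian w (at X)"

text \<open>Elasticity tensor C = 2 mu I_s + lam I (x) I acting on a second-order tensor.\<close>
definition elast :: "real \<Rightarrow> real \<Rightarrow> real^3^3 \<Rightarrow> real^3^3" where
  "elast \<mu> lam A = (2 * \<mu>) *\<^sub>R ((1/2) *\<^sub>R (A + transpose A)) + (lam * trace A) *\<^sub>R mat 1"

definition elast_inv :: "real \<Rightarrow> real \<Rightarrow> real^3^3 \<Rightarrow> real^3^3" where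
  "elast_inv \<mu> lam S = (THE A. transpose A = A \<and> elast \<mu> lam A = S)"

definition lipschitz_domain :: "(real^3) set \<Rightarrow> bool" where
  "lipschitz_domain \<Omega> \<longleftrightarrow> open \<Omega> \<and> connected \<Omega> \<and> \<Omega> \<noteq> {} \<and>
     (\<forall>x\<in>frontier \<Omega>. \<exists>(R :: real^3 \<Rightarrow> real^3) (r::real) (h::real) (L::real) (g :: real \<Rightarrow> real \<Rightarrow> real).
        orthogonal_transformation R \<and> 0 < r \<and> 0 < h \<and> g 0 0 = 0 \<and>
        (\<forall>a b a' b'. \<bar>g a b - g a' b'\<bar> \<le> L * sqrt ((a - a')\<^sup>2 + (b - b')\<^sup>2)) \<and>
        (\<forall>a b. a\<^sup>2 + b\<^sup>2 < r\<^sup>2 \<longrightarrow> \<bar>g a b\<bar> < h) \<and>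
        (\<forall>y. (R (y - x))$1 ^ 2 + (R (y - x))$2 ^ 2 < r\<^sup>2 \<and> \<bar>(R (y - x))$3\<bar> < h \<longrightarrow>
              (y \<in> \<Omega> \<longleftrightarrow> (R (y - x))$3 < g ((R (y - x))$1) ((R (y - x))$2))))"

definition field :: "real^'i \<Rightarrow> ('i \<Rightarrow> 'x \<Rightarrow> 'y::real_vector) \<Rightarrow> 'x \<Rightarrow> 'y" where
  "field c b X = (\<Sum>i\<in>UNIV. c$i *\<^sub>R b i X)"

definition tder :: "(real \<Rightarrow> 'x \<Rightarrow> 'y::real_normed_vector) \<Rightarrow> real \<Rightarrow> 'x \<Rightarrow> 'y" where
  "tder u t X = vector_derivative (\<lambda>s. u s X) (at t)"

definition lin_indep_on :: "'x set \<Rightarrow> ('i::finite \<Rightarrow> 'x \<Rightarrow> 'y::real_vector) \<Rightarrow> bool" where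
  "lin_indep_on A b \<longleftrightarrow>
     (\<forall>c :: 'i \<Rightarrow> real. (\<forall>X\<in>A. (\<Sum>i\<in>UNIV. c i *\<^sub>R b i X) = 0) \<longrightarrow> (\<forall>i. c i = 0))"

definition Mv :: "real \<Rightarrow> (real^3) set \<Rightarrow> ('v::finite \<Rightarrow> real^3 \<Rightarrow> real^3) \<Rightarrow> real^'v^'v" where
  "Mv \<rho>0 \<Omega> \<phi> = (\<chi> i i'. set_lebesgue_integral lborel \<Omega> (\<lambda>X. \<rho>0 * (\<phi> i X \<bullet> \<phi> i' X)))"

definition MS :: "real \<Rightarrow> real \<Rightarrow> (real^3) set \<Rightarrow> ('s::finite \<Rightarrow> real^3 \<Rightarrow> real^3^3) \<Rightarrow> real^'s^'s" where
  "MS \<mu> lam \<Omega> \<psi> = (\<chi> j j'. set_lebesgue_integral lborel \<Omega> (\<lambda>X. ddot (\<psi> j X) (elast_inv \<mu> lam (\<psi> j' X))))"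

definition MF :: "(real^3) set \<Rightarrow> ('f::finite \<Rightarrow> real^3 \<Rightarrow> real^3^3) \<Rightarrow> real^'f^'f" where
  "MF \<Omega> \<theta> = (\<chi> l l'. set_lebesgue_integral lborel \<Omega> (\<lambda>X. ddot (\<theta> l X) (\<theta> l' X)))"

definition Zmat :: "(real^3) set \<Rightarrow> ('v::finite \<Rightarrow> real^3 \<Rightarrow> real^3) \<Rightarrow> ('f::finite \<Rightarrow> real^3 \<Rightarrow> real^3^3) \<Rightarrow> real^'v^'f" where
  "Zmat \<Omega> \<phi> \<theta> = (\<chi> l i. set_lebesgue_integral lborel \<Omega> (\<lambda>X. ddot (\<theta> l X) (Grad (\<phi> i) X)))"

definition Kmat :: "(real^3) set \<Rightarrow> (real^3) set \<Rightarrow> (real^3) measure \<Rightarrow> (real^3 \<Rightarrow> real^3) \<Rightarrow>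
    ('v::finite \<Rightarrow> real^3 \<Rightarrow> real^3) \<Rightarrow> ('s::finite \<Rightarrow> real^3 \<Rightarrow> real^3^3) \<Rightarrow>
    ('f::finite \<Rightarrow> real^3 \<Rightarrow> real^3^3) \<Rightarrow> real^'f \<Rightarrow> real^'s^'v" where
  "Kmat \<Omega> \<Sigma>D \<sigma> N \<phi> \<psi> \<theta> Fc = (\<chi> i j.
      set_lebesgue_integral lborel \<Omega> (\<lambda>X. ddot (transpose (Grad (\<phi> i) X) ** field Fc \<theta> X) (\<psi> j X))
    - set_lebesgue_integral \<sigma> \<Sigma>D (\<lambda>X. \<phi> i X \<bullet> ((field Fc \<theta> X ** \<psi> j X) *v N X)))"

definition Gtau :: "(real^3) set \<Rightarrow> (real^3) measure \<Rightarrow> ('v::finite \<Rightarrow> real^3 \<Rightarrow> real^3) \<Rightarrow>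
    ('k::finite \<Rightarrow> real^3 \<Rightarrow> real^3) \<Rightarrow> real^'k^'v" where
  "Gtau \<Sigma>N \<sigma> \<phi> \<xi> = (\<chi> i k. set_lebesgue_integral \<sigma> \<Sigma>N (\<lambda>X. \<phi> i X \<bullet> \<xi> k X))"

definition Gnu :: "(real^3) set \<Rightarrow> (real^3) measure \<Rightarrow> (real^3 \<Rightarrow> real^3) \<Rightarrow>
    ('s::finite \<Rightarrow> real^3 \<Rightarrow> real^3^3) \<Rightarrow> ('f::finite \<Rightarrow> real^3 \<Rightarrow> real^3^3) \<Rightarrow>
    ('m::finite \<Rightarrow> real^3 \<Rightarrow> real^3) \<Rightarrow> real^'f \<Rightarrow> real^'m^'s" where
  "Gnu \<Sigma>D \<sigma> N \<psi> \<theta> \<zeta> Fc = (\<chi> j m.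
      set_lebesgue_integral \<sigma> \<Sigma>D (\<lambda>X. ((field Fc \<theta> X ** \<psi> j X) *v N X) \<bullet> \<zeta> m X))"

definition sel3 :: "('a \<Rightarrow> 'x) \<Rightarrow> ('b \<Rightarrow> 'x) \<Rightarrow> ('c \<Rightarrow> 'x) \<Rightarrow> 'a + ('b + 'c) \<Rightarrow> 'x" where
  "sel3 f g h = case_sum f (case_sum g h)"

definition stack3 :: "real^'a \<Rightarrow> real^'b \<Rightarrow> real^'c \<Rightarrow> real^('a + ('b + 'c))" where
  "stack3 a b c = (\<chi> r. sel3 (\<lambda>i. a$i) (\<lambda>i. b$i) (\<lambda>i. c$i) r)"

definition stack2 :: "real^'a \<Rightarrow> real^'b \<Rightarrow> real^('a + 'b)" where
  "stack2 a b = (\<chi> r. case_sum (\<lambda>i. a$i) (\<lambda>i. b$i) r)"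

definition block33 ::
  "real^'a^'a \<Rightarrow> real^'b^'a \<Rightarrow> real^'c^'a \<Rightarrow>
   real^'a^'b \<Rightarrow> real^'b^'b \<Rightarrow> real^'c^'b \<Rightarrow>
   real^'a^'c \<Rightarrow> real^'b^'c \<Rightarrow> real^'c^'c \<Rightarrow> real^('a + ('b + 'c))^('a + ('b + 'c))" where
  "block33 A11 A12 A13 A21 A22 A23 A31 A32 A33 = (\<chi> r s.
     sel3 (\<lambda>i. sel3 (\<lambda>j. A11$i$j) (\<lambda>j. A12$i$j) (\<lambda>j. A13$i$j) s)
          (\<lambda>i. sel3 (\<lambda>j. A21$i$j) (\<lambda>j. A22$i$j) (\<lambda>j. A23$i$j) s)
          (\<lambda>i. sel3 (\<lambda>j. A31$i$j) (\<lambda>j. A32$i$j) (\<lambda>j. A33$i$j) s) r)"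

definition block32 ::
  "real^'d^'a \<Rightarrow> real^'e^'a \<Rightarrow> real^'d^'b \<Rightarrow> real^'e^'b \<Rightarrow> real^'d^'c \<Rightarrow> real^'e^'c
   \<Rightarrow> real^('d + 'e)^('a + ('b + 'c))" where
  "block32 A11 A12 A21 A22 A31 A32 = (\<chi> r s.
     sel3 (\<lambda>i. case_sum (\<lambda>j. A11$i$j) (\<lambda>j. A12$i$j) s)
          (\<lambda>i. case_sum (\<lambda>j. A21$i$j) (\<lambda>j. A22$i$j) s)
          (\<lambda>i. case_sum (\<lambda>j. A31$i$j) (\<lambda>j. A32$i$j) s) r)"

definition block23 ::
  "real^'a^'d \<Rightarrow> real^'b^'d \<Rightarrow> real^'c^'d \<Rightarrow> real^'a^'e \<Rightarrow> real^'b^'e \<Rightarrow> real^'c^'e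
   \<Rightarrow> real^('a + ('b + 'c))^('d + 'e)" where
  "block23 A11 A12 A13 A21 A22 A23 = (\<chi> r s.
     case_sum (\<lambda>i. sel3 (\<lambda>j. A11$i$j) (\<lambda>j. A12$i$j) (\<lambda>j. A13$i$j) s)
              (\<lambda>i. sel3 (\<lambda>j. A21$i$j) (\<lambda>j. A22$i$j) (\<lambda>j. A23$i$j) s) r)"

end

(* Every integral in the weak form is bilinear in the coefficient vectors of one test field and
   one trial field, the deformation gradient F being frozen at its current value.  Expanding both
   fields in their bases and integrating term by term turns each integral into a quadratic form
   a . (M *v b) of the corresponding Galerkin matrix; since the test coefficients are arbitrary,
   the weak form is equivalent to the block state equation.  The mass matrices are Gram matrices
   of pointwise positive definite forms (for M_S the compliance C^-1, which has a closed form on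
   symmetric tensors), and they are positive definite because a nonzero combination of linearly
   independent continuous basis functions is nonzero on a ball.  In dH/dt the coupling terms
   v^T K S and S^T K^T v cancel, leaving the power supplied through the ports. *)
theory Submission
  imports Defs
begin

section \<open>Block vectors and block matrices\<close>

lemma sum_UNIV_Plus:
  "(\<Sum>x\<in>(UNIV :: ('a::finite + 'b::finite) set). f x) = (\<Sum>a\<in>UNIV. f (Inl a)) + (\<Sum>b\<in>UNIV. f (Inr b))"
  by (subst UNIV_Plus_UNIV [symmetric], subst sum.Plus) (auto simp: comp_def)

lemma stack3_nth [simp]:
  "stack3 a b c $ Inl i = a $ i" "stack3 a b c $ Inr (Inl j) = b $ j" "stack3 a b c $ Inr (Inr k) = c $ k"
  by (simp_all add: stack3_def sel3_def)

lemma stack2_nth [simp]: "stack2 a b $ Inl i = a $ i" "stack2 a b $ Inr j = b $ j"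
  by (simp_all add: stack2_def)

lemma stack3_eq_iff: "stack3 a b c = stack3 a' b' c' \<longleftrightarrow> a = a' \<and> b = b' \<and> c = c'"
proof
  assume eq: "stack3 a b c = stack3 a' b' c'"
  have "a $ i = a' $ i" "b $ j = b' $ j" "c $ k = c' $ k" for i j k
    using arg_cong [OF eq, of "\<lambda>x. x $ Inl i"] arg_cong [OF eq, of "\<lambda>x. x $ Inr (Inl j)"]
      arg_cong [OF eq, of "\<lambda>x. x $ Inr (Inr k)"] by simp_all
  then show "a = a' \<and> b = b' \<and> c = c'" by (simp add: vec_eq_iff)
qed simp

lemma stack3_add: "stack3 a b c + stack3 a' b' c' = stack3 (a + a') (b + b') (c + c')"
  by (simp add: vec_eq_iff stack3_def sel3_def split: sum.splits)

lemma stack3_cases: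
  obtains a b c where "x = stack3 a b c"
proof
  show "x = stack3 (\<chi> i. x $ Inl i) (\<chi> i. x $ Inr (Inl i)) (\<chi> i. x $ Inr (Inr i))"
    by (simp add: vec_eq_iff stack3_def sel3_def split: sum.splits)
qed

lemma stack3_zero: "stack3 0 0 0 = 0"
  by (simp add: vec_eq_iff stack3_def sel3_def split: sum.splits)

lemma inner_stack3: "stack3 a b c \<bullet> stack3 a' b' c' = a \<bullet> a' + b \<bullet> b' + c \<bullet> c'"
  by (simp add: inner_vec_def sum_UNIV_Plus)

lemma inner_stack2: "stack2 a b \<bullet> stack2 a' b' = a \<bullet> a' + b \<bullet> b'"
  by (simp add: inner_vec_def sum_UNIV_Plus)

lemma sum3_cases:
  obtains (first) i where "r = Inl i" | (second) j where "r = Inr (Inl j)"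
    | (third) k where "r = Inr (Inr k)"
  by (metis sum.exhaust)

lemma block33_mult_stack3:
  "block33 A11 A12 A13 A21 A22 A23 A31 A32 A33 *v stack3 a b c =
   stack3 (A11 *v a + A12 *v b + A13 *v c) (A21 *v a + A22 *v b + A23 *v c)
          (A31 *v a + A32 *v b + A33 *v c)"
  unfolding vec_eq_iff
proof
  fix r
  show "(block33 A11 A12 A13 A21 A22 A23 A31 A32 A33 *v stack3 a b c) $ r =
    stack3 (A11 *v a + A12 *v b + A13 *v c) (A21 *v a + A22 *v b + A23 *v c)
      (A31 *v a + A32 *v b + A33 *v c) $ r"
    by (cases r rule: sum3_cases)
      (simp_all add: matrix_vector_mult_def block33_def sel3_def sum_UNIV_Plus)
qed

lemma block32_mult_stack2:
  "block32 A11 A12 A21 A22 A31 A32 *v stack2 a b =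
   stack3 (A11 *v a + A12 *v b) (A21 *v a + A22 *v b) (A31 *v a + A32 *v b)"
  unfolding vec_eq_iff
proof
  fix r
  show "(block32 A11 A12 A21 A22 A31 A32 *v stack2 a b) $ r =
    stack3 (A11 *v a + A12 *v b) (A21 *v a + A22 *v b) (A31 *v a + A32 *v b) $ r"
    by (cases r rule: sum3_cases)
      (simp_all add: matrix_vector_mult_def block32_def sel3_def sum_UNIV_Plus)
qed

lemma block23_mult_stack3:
  "block23 A11 A12 A13 A21 A22 A23 *v stack3 a b c =
   stack2 (A11 *v a + A12 *v b + A13 *v c) (A21 *v a + A22 *v b + A23 *v c)"
  unfolding vec_eq_iff
proof
  fix r
  show "(block23 A11 A12 A13 A21 A22 A23 *v stack3 a b c) $ r =
    stack2 (A11 *v a + A12 *v b + A13 *v c) (A21 *v a + A22 *v b + A23 *v c) $ r"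
    by (cases r) (simp_all add: matrix_vector_mult_def block23_def sel3_def sum_UNIV_Plus)
qed

lemma transpose_block33:
  "transpose (block33 A11 A12 A13 A21 A22 A23 A31 A32 A33) =
   block33 (transpose A11) (transpose A21) (transpose A31) (transpose A12) (transpose A22)
     (transpose A32) (transpose A13) (transpose A23) (transpose A33)"
  by (simp add: vec_eq_iff transpose_def block33_def sel3_def split: sum.splits)

lemma uminus_block33:
  "- block33 A11 A12 A13 A21 A22 A23 A31 A32 A33 =
   block33 (- A11) (- A12) (- A13) (- A21) (- A22) (- A23) (- A31) (- A32) (- A33)"
  by (simp add: vec_eq_iff block33_def sel3_def split: sum.splits)

lemma transpose_zero [simp]: "transpose (0 :: 'a::zero^'n^'m) = 0"
  by (simp add: vec_eq_iff transpose_def)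

lemma transpose_uminus [simp]: "transpose (- A :: 'a::ab_group_add^'n^'m) = - transpose A"
  by (simp add: vec_eq_iff transpose_def)

lemma uminus_matrix_vector_mult: "(- A :: real^'n^'m) *v x = - (A *v x)"
  by (simp add: vec_eq_iff matrix_vector_mult_def sum_negf)

lemma inner_transpose_matrix_vector_mult: "(x :: real^'m) \<bullet> (transpose A *v y) = y \<bullet> (A *v x)"
  by (simp add: inner_commute[of x] dot_lmul_matrix)

lemma block33_diag_symmetric:
  assumes "transpose A = A" "transpose B = B" "transpose C = C"
  shows "transpose (block33 A 0 0 0 B 0 0 0 C) = block33 A 0 0 0 B 0 0 0 C"
  using assms by (simp add: transpose_block33)

lemma block33_diag_pos_definite:
  assumes A: "\<And>a. a \<noteq> 0 \<Longrightarrow> 0 < a \<bullet> (A *v a)"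
    and B: "\<And>b. b \<noteq> 0 \<Longrightarrow> 0 < b \<bullet> (B *v b)"
    and C: "\<And>c. c \<noteq> 0 \<Longrightarrow> 0 < c \<bullet> (C *v c)"
    and "x \<noteq> 0"
  shows "0 < x \<bullet> (block33 A 0 0 0 B 0 0 0 C *v x)"
proof -
  obtain a b c where x: "x = stack3 a b c" by (rule stack3_cases)
  have "0 \<le> a \<bullet> (A *v a)" "0 \<le> b \<bullet> (B *v b)" "0 \<le> c \<bullet> (C *v c)"
    using A B C by (metis inner_zero_left order.strict_iff_not order_refl)+
  moreover have "a \<noteq> 0 \<or> b \<noteq> 0 \<or> c \<noteq> 0"
    using \<open>x \<noteq> 0\<close> x stack3_zero by blast
  ultimately show ?thesis
    using A B C by (auto simp: x block33_mult_stack3 inner_stack3 add_pos_nonneg add_nonneg_pos)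
qed

lemma block33_structure_skew:
  "transpose (block33 0 (- K) (- transpose Z) (transpose K) 0 0 Z 0 0) =
   - block33 0 (- K) (- transpose Z) (transpose K) 0 0 Z 0 0"
  by (simp add: transpose_block33 uminus_block33)

section \<open>Tensor algebra and linear elasticity\<close>

lemma ddot_eq_inner: "ddot A B = A \<bullet> B"
  by (simp add: ddot_def inner_vec_def)

lemma trace_scaleR: "trace (c *\<^sub>R A :: real^'n^'n) = c * trace A"
  by (simp add: trace_def sum_distrib_left)

lemma inner_mat_1: "(A :: real^'n^'n) \<bullet> mat 1 = trace A"
  by (simp add: inner_vec_def trace_def mat_def if_distrib cong: if_cong)

lemma ddot_symmetric_transpose_mult:
  assumes "transpose S = S"
  shows "ddot S (transpose F ** G) = ddot (transpose G ** F) (S :: real^'n^'n)"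
proof -
  have S: "S $ b $ a = S $ a $ b" for a b
    using assms by (metis transpose_def vec_lambda_beta)
  have "ddot S (transpose F ** G) = (\<Sum>a\<in>UNIV. \<Sum>b\<in>UNIV. \<Sum>k\<in>UNIV. S$a$b * (F$k$a * G$k$b))"
    by (simp add: ddot_def matrix_matrix_mult_def transpose_def sum_distrib_left)
  also have "\<dots> = (\<Sum>b\<in>UNIV. \<Sum>a\<in>UNIV. \<Sum>k\<in>UNIV. S$b$a * (F$k$a * G$k$b))"
    by (subst sum.swap) (simp add: S)
  also have "\<dots> = ddot (transpose G ** F) S"
    by (simp add: ddot_def matrix_matrix_mult_def transpose_def sum_distrib_left sum_distrib_right mult_ac)
  finally show ?thesis .
qed

lemma trace_square_le: "(trace (X :: real^3^3))\<^sup>2 \<le> 3 * (X \<bullet> X)"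
proof -
  have "(trace X)\<^sup>2 \<le> 3 * ((X$1$1)\<^sup>2 + (X$2$2)\<^sup>2 + (X$3$3)\<^sup>2)"
    using sum_squares_ge_zero[of "X$1$1 - X$2$2" "X$2$2 - X$3$3"]
      zero_le_power2[of "X$1$1 - X$3$3"]
    by (simp add: trace_def sum_3 power2_eq_square algebra_simps)
  also have "(X$1$1)\<^sup>2 + (X$2$2)\<^sup>2 + (X$3$3)\<^sup>2 \<le> X \<bullet> X"
    by (simp add: inner_vec_def sum_3 power2_eq_square)
  finally show ?thesis by simp
qed

text \<open>The inverse of the elasticity tensor in closed form: taking traces in
  \<open>S = 2\<mu> A + \<lambda> (tr A) I\<close> gives \<open>tr S = (2\<mu> + 3\<lambda>) tr A\<close>.\<close>
definition compliance :: "real \<Rightarrow> real \<Rightarrow> real^3^3 \<Rightarrow> real^3^3" where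
  "compliance \<mu> lam S = (1 / (2 * \<mu>)) *\<^sub>R (S - (lam / (2 * \<mu> + 3 * lam) * trace S) *\<^sub>R mat 1)"

lemma elast_symmetric:
  "transpose A = A \<Longrightarrow> elast \<mu> lam A = (2 * \<mu>) *\<^sub>R A + (lam * trace A) *\<^sub>R mat 1"
  by (simp add: elast_def scaleR_2 [symmetric])

lemma trace_compliance:
  assumes "\<mu> \<noteq> 0" "2 * \<mu> + 3 * lam \<noteq> 0"
  shows "trace (compliance \<mu> lam S) = trace S / (2 * \<mu> + 3 * lam)"
proof -
  have "trace (compliance \<mu> lam S) = (trace S - 3 * (lam / (2 * \<mu> + 3 * lam) * trace S)) / (2 * \<mu>)"
    by (simp add: compliance_def trace_sub trace_scaleR trace_I)
  also have "trace S - 3 * (lam / (2 * \<mu> + 3 * lam) * trace S) = 2 * \<mu> * (trace S / (2 * \<mu> + 3 * lam))"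
    using assms(2) by (simp add: divide_simps) (simp add: algebra_simps)
  finally show ?thesis
    using assms(1) by simp
qed

lemma transpose_compliance:
  "transpose S = S \<Longrightarrow> transpose (compliance \<mu> lam S) = compliance \<mu> lam S"
  by (simp add: compliance_def vec_eq_iff transpose_def mat_def)

lemma elast_compliance:
  assumes "\<mu> \<noteq> 0" "2 * \<mu> + 3 * lam \<noteq> 0" "transpose S = S"
  shows "elast \<mu> lam (compliance \<mu> lam S) = S"
proof -
  have "(2 * \<mu>) *\<^sub>R compliance \<mu> lam S = S - (lam / (2 * \<mu> + 3 * lam) * trace S) *\<^sub>R mat 1"
    using assms(1) by (simp add: compliance_def)
  then show ?thesis
    using assms by (simp add: elast_symmetric transpose_compliance trace_compliance)
qed

lemma compliance_elast:
  assumes "\<mu> \<noteq> 0" "2 * \<mu> + 3 * lam \<noteq> 0" "transpose A = A"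
  shows "compliance \<mu> lam (elast \<mu> lam A) = A"
proof -
  have "trace (elast \<mu> lam A) = (2 * \<mu> + 3 * lam) * trace A"
    using assms(3) by (simp add: elast_symmetric trace_add trace_scaleR trace_I algebra_simps)
  then have "lam / (2 * \<mu> + 3 * lam) * trace (elast \<mu> lam A) = lam * trace A"
    using assms(2) by simp
  then show ?thesis
    using assms by (simp add: compliance_def elast_symmetric)
qed

lemma elast_inv_eq_compliance:
  assumes "\<mu> \<noteq> 0" "2 * \<mu> + 3 * lam \<noteq> 0" "transpose S = S"
  shows "elast_inv \<mu> lam S = compliance \<mu> lam S"
  unfolding elast_inv_def
proof (rule the_equality)
  show "transpose (compliance \<mu> lam S) = compliance \<mu> lam S \<and> elast \<mu> lam (compliance \<mu> lam S) = S"
    using assms by (simp add: transpose_compliance elast_compliance)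
  show "A = compliance \<mu> lam S" if "transpose A = A \<and> elast \<mu> lam A = S" for A
    using that assms compliance_elast by metis
qed

lemma ddot_compliance_pos:
  assumes "\<mu> > 0" "3 * lam + 2 * \<mu> > 0" "A \<noteq> 0"
  shows "0 < ddot A (compliance \<mu> lam A)"
proof -
  define c where "c = lam / (2 * \<mu> + 3 * lam)"
  have "1 - 3 * c > 0"
    using assms by (simp add: c_def field_simps)
  have "0 < A \<bullet> A" using assms(3) by simp
  have "0 < A \<bullet> A - c * (trace A)\<^sup>2"
  proof (cases "c \<le> 0")
    case True
    then have "c * (trace A)\<^sup>2 \<le> 0" by (simp add: mult_nonpos_nonneg)
    then show ?thesis using \<open>0 < A \<bullet> A\<close> by linarith
  next
    case False
    then have "c * (trace A)\<^sup>2 \<le> c * (3 * (A \<bullet> A))"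
      by (simp add: trace_square_le)
    moreover have "0 < (1 - 3 * c) * (A \<bullet> A)"
      using \<open>1 - 3 * c > 0\<close> \<open>0 < A \<bullet> A\<close> by simp
    ultimately show ?thesis
      by (simp add: algebra_simps)
  qed
  then show ?thesis
    using assms(1)
    by (simp add: compliance_def ddot_eq_inner inner_diff_right inner_mat_1 c_def power2_eq_square)
qed

lemma linear_compliance: "linear (compliance \<mu> lam)"
proof -
  define c where "c = lam / (2 * \<mu> + 3 * lam)"
  have "compliance \<mu> lam = (\<lambda>S. (1 / (2 * \<mu>)) *\<^sub>R (S - (c * trace S) *\<^sub>R mat 1))"
    by (simp add: fun_eq_iff compliance_def c_def)
  then show ?thesis
    by (simp add: linear_iff trace_add trace_scaleR add_divide_distrib algebra_simps)
qed

lemma continuous_on_compliance: "continuous_on A (compliance \<mu> lam)"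
  by (intro linear_continuous_on linear_conv_bounded_linear [THEN iffD1] linear_compliance)

lemma linear_transpose: "linear (transpose :: real^'n^'m \<Rightarrow> real^'m^'n)"
  by (rule linearI) (simp_all add: vec_eq_iff transpose_def)

lemma linear_matrix_mult_left: "linear (\<lambda>A :: real^'n^'m. A ** B)"
  by (rule linearI)
    (simp_all add: matrix_matrix_mult_def vec_eq_iff sum.distrib distrib_right
      sum_distrib_left mult.assoc)

lemma linear_matrix_mult_right: "linear (\<lambda>B :: real^'k^'n. A ** B)"
  by (rule linearI) (simp_all add: matrix_add_ldistrib matrix_scalar_ac scalar_matrix_assoc [symmetric])

lemma linear_matrix_vector_mult_left: "linear (\<lambda>A :: real^'n^'m. A *v x)"
  by (rule linearI) (simp_all add: matrix_vector_mult_add_rdistrib scaleR_matrix_vector_assoc)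

lemmas linear_tensor_maps =
  linear_transpose linear_matrix_mult_left linear_matrix_mult_right
  linear_matrix_vector_mult_left linear_compliance

lemmas tensor_map_sum = linear_tensor_maps [THEN real_vector.linear_sum]
lemmas tensor_map_scaleR = linear_tensor_maps [THEN real_vector.linear_scale]

section \<open>Galerkin fields and their integrals\<close>

lemma inner_field_field:
  fixes f :: "'i::finite \<Rightarrow> 'x \<Rightarrow> 'y::real_inner" and g :: "'j::finite \<Rightarrow> 'x \<Rightarrow> 'y"
  shows "field a f X \<bullet> field b g X = (\<Sum>i\<in>UNIV. \<Sum>j\<in>UNIV. a $ i * b $ j * (f i X \<bullet> g j X))"
  by (simp add: field_def inner_sum_left) (simp add: inner_sum_right sum_distrib_left ac_simps)

lemma field_symmetric:
  fixes \<psi> :: "'j::finite \<Rightarrow> 'x \<Rightarrow> real^'n^'n"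
  assumes "\<And>j X. transpose (\<psi> j X) = \<psi> j X"
  shows "transpose (field c \<psi> X) = field c \<psi> X"
  by (simp add: field_def tensor_map_sum tensor_map_scaleR assms)

lemma continuous_on_field:
  fixes b :: "'i::finite \<Rightarrow> 'x::topological_space \<Rightarrow> 'y::real_normed_vector"
  assumes "\<And>i. continuous_on A (b i)"
  shows "continuous_on A (field c b)"
  unfolding field_def using assms by (intro continuous_on_sum continuous_on_scaleR continuous_on_const)

lemma lin_indep_on_field_nonzero:
  assumes "lin_indep_on A b" "c \<noteq> 0"
  obtains X where "X \<in> A" "field c b X \<noteq> 0"
  using assms by (auto simp: lin_indep_on_def field_def vec_eq_iff)

lemma Grad_field:
  assumes "\<And>i. \<phi> i differentiable (at X)"
  shows "Grad (field c \<phi>) X = field c (\<lambda>i. Grad (\<phi> i)) X"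
proof -
  have "(\<phi> i has_derivative frechet_derivative (\<phi> i) (at X)) (at X)" for i
    using assms frechet_derivative_works by blast
  then have "(field c \<phi> has_derivative
      (\<lambda>h. \<Sum>i\<in>UNIV. c $ i *\<^sub>R frechet_derivative (\<phi> i) (at X) h)) (at X)"
    unfolding field_def [abs_def]
    by (intro has_derivative_sum bounded_linear.has_derivative [OF bounded_linear_scaleR_right])
  then have "frechet_derivative (field c \<phi>) (at X) =
      (\<lambda>h. \<Sum>i\<in>UNIV. c $ i *\<^sub>R frechet_derivative (\<phi> i) (at X) h)"
    by (rule frechet_derivative_at [symmetric])
  then show ?thesis
    by (simp add: Grad_def jacobian_def field_def matrix_def vec_eq_iff)
qed

lemma tder_field:
  assumes "u differentiable (at t)"
  shows "tder (\<lambda>s. field (u s) b) t X = field (vector_derivative u (at t)) b X"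
proof -
  have "(u has_vector_derivative vector_derivative u (at t)) (at t)"
    using assms vector_derivative_works by blast
  then have "((\<lambda>s. \<Sum>i\<in>UNIV. u s $ i *\<^sub>R b i X) has_vector_derivative
      (\<Sum>i\<in>UNIV. vector_derivative u (at t) $ i *\<^sub>R b i X)) (at t)"
    by (intro has_vector_derivative_sum
        bounded_linear.has_vector_derivative [OF bounded_linear_scaleR_left]
        bounded_linear.has_vector_derivative [OF bounded_linear_vec_nth])
  then show ?thesis
    unfolding tder_def field_def by (rule vector_derivative_at)
qed

lemma set_integrable_sum:
  fixes f :: "'i \<Rightarrow> 'x \<Rightarrow> 'b::{banach, second_countable_topology}"
  shows "(\<And>i. i \<in> I \<Longrightarrow> set_integrable M A (f i)) \<Longrightarrow> set_integrable M A (\<lambda>x. \<Sum>i\<in>I. f i x)"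
  unfolding set_integrable_def by (simp add: scaleR_sum_right)

lemma set_integral_sum:
  fixes f :: "'i \<Rightarrow> 'x \<Rightarrow> 'b::{banach, second_countable_topology}"
  shows "(\<And>i. i \<in> I \<Longrightarrow> set_integrable M A (f i)) \<Longrightarrow>
    (LINT x:A|M. (\<Sum>i\<in>I. f i x)) = (\<Sum>i\<in>I. LINT x:A|M. f i x)"
  unfolding set_integrable_def set_lebesgue_integral_def
  by (simp add: scaleR_sum_right Bochner_Integration.integral_sum)

lemma set_integrable_inner_field:
  fixes f :: "'i::finite \<Rightarrow> 'x \<Rightarrow> 'y::real_inner"
  assumes "\<And>i. set_integrable M A (\<lambda>x. f i x \<bullet> h x)"
    and "\<And>x. x \<in> A \<Longrightarrow> k x = field c f x \<bullet> h x"
  shows "set_integrable M A k"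
proof -
  have "set_integrable M A (\<lambda>x. \<Sum>i\<in>UNIV. c $ i * (f i x \<bullet> h x))"
    using assms(1) by (intro set_integrable_sum set_integrable_mult_right)
  moreover have "set_integrable M A k \<longleftrightarrow> set_integrable M A (\<lambda>x. \<Sum>i\<in>UNIV. c $ i * (f i x \<bullet> h x))"
    using assms(2) by (intro set_integrable_cong) (simp_all add: field_def inner_sum_left)
  ultimately show ?thesis by simp
qed

lemma set_integral_inner_fields:
  fixes f :: "'i::finite \<Rightarrow> 'x \<Rightarrow> 'y::real_inner" and g :: "'j::finite \<Rightarrow> 'x \<Rightarrow> 'y"
  assumes int: "\<And>i j. set_integrable M A (\<lambda>x. f i x \<bullet> g j x)"
    and h: "\<And>x. x \<in> A \<Longrightarrow> h x = field a f x \<bullet> field b g x"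
  shows "set_integrable M A h"
    and "(LINT x:A|M. h x) = a \<bullet> ((\<chi> i j. LINT x:A|M. f i x \<bullet> g j x) *v b)"
proof -
  define s where "s x = (\<Sum>i\<in>UNIV. \<Sum>j\<in>UNIV. a $ i * b $ j * (f i x \<bullet> g j x))" for x
  have hs: "x \<in> A \<Longrightarrow> h x = s x" for x
    using h by (simp add: s_def inner_field_field)
  have int_row: "set_integrable M A (\<lambda>x. \<Sum>j\<in>UNIV. a $ i * b $ j * (f i x \<bullet> g j x))" for i
    using int by (intro set_integrable_sum set_integrable_mult_right)
  then have "set_integrable M A s"
    unfolding s_def by (rule set_integrable_sum)
  moreover have "set_integrable M A h \<longleftrightarrow> set_integrable M A s"
    by (rule set_integrable_cong) (simp_all add: hs)
  ultimately show "set_integrable M A h" by simp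
  have "(LINT x:A|M. h x) = (LINT x:A|M. s x)"
    unfolding set_lebesgue_integral_def
    by (rule Bochner_Integration.integral_cong) (auto simp: hs split: split_indicator)
  also have "\<dots> = (\<Sum>i\<in>UNIV. \<Sum>j\<in>UNIV. a $ i * b $ j * (LINT x:A|M. f i x \<bullet> g j x))"
    unfolding s_def using int int_row by (simp add: set_integral_sum)
  also have "\<dots> = a \<bullet> ((\<chi> i j. LINT x:A|M. f i x \<bullet> g j x) *v b)"
    by (simp add: inner_vec_def matrix_vector_mult_def sum_distrib_left mult_ac)
  finally show "(LINT x:A|M. h x) = a \<bullet> ((\<chi> i j. LINT x:A|M. f i x \<bullet> g j x) *v b)" .
qed

lemma set_integral_pos_continuous_on_open:
  fixes f :: "'a::euclidean_space \<Rightarrow> real"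
  assumes "open \<Omega>" "continuous_on \<Omega> f" "\<And>x. x \<in> \<Omega> \<Longrightarrow> 0 \<le> f x" "x0 \<in> \<Omega>" "0 < f x0"
    and int: "set_integrable lborel \<Omega> f"
  shows "0 < (LINT x:\<Omega>|lborel. f x)"
proof -
  define c where "c = f x0 / 2"
  have "open (\<Omega> \<inter> f -` {c<..})" "x0 \<in> \<Omega> \<inter> f -` {c<..}"
    using assms continuous_open_preimage [of \<Omega> f "{c<..}"] by (auto simp: c_def)
  then obtain e where "e > 0" and ball: "ball x0 e \<subseteq> \<Omega> \<inter> f -` {c<..}"
    by (meson openE)
  have ind: "indicator \<Omega> x *\<^sub>R (c * indicator (ball x0 e) x) = c * indicator (ball x0 e) x" for x
    using ball by (auto split: split_indicator)
  have "emeasure lborel (ball x0 e) < \<infinity>"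
    by (rule emeasure_bounded_finite) simp
  then have int_ball: "set_integrable lborel \<Omega> (\<lambda>x. c * indicator (ball x0 e) x)"
    unfolding set_integrable_def ind by (intro integrable_mult_right integrable_real_indicator) simp
  have "0 < c * measure lborel (ball x0 e)"
    using \<open>e > 0\<close> \<open>0 < f x0\<close> by (simp add: c_def)
  also have "\<dots> = (LINT x:\<Omega>|lborel. c * indicator (ball x0 e) x)"
    unfolding set_lebesgue_integral_def ind by simp
  also have "\<dots> \<le> (LINT x:\<Omega>|lborel. f x)"
    using ball assms(3) by (intro set_integral_mono [OF int_ball int]) (auto split: split_indicator)
  finally show ?thesis .
qed

lemma set_integral_quadratic_field_pos:
  fixes b :: "'i::finite \<Rightarrow> 'a::euclidean_space \<Rightarrow> 'b::real_normed_vector" and Q :: "'b \<Rightarrow> real"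
  assumes "open \<Omega>" "lin_indep_on \<Omega> b" "\<And>i. continuous_on \<Omega> (b i)" "continuous_on UNIV Q"
    and "\<And>y. 0 \<le> Q y" "\<And>y. y \<noteq> 0 \<Longrightarrow> 0 < Q y"
    and "set_integrable lborel \<Omega> (\<lambda>X. Q (field c b X))" "c \<noteq> 0"
  shows "0 < (LINT X:\<Omega>|lborel. Q (field c b X))"
proof -
  obtain X0 where "X0 \<in> \<Omega>" "field c b X0 \<noteq> 0"
    using assms(2,8) by (rule lin_indep_on_field_nonzero)
  moreover have "continuous_on \<Omega> (\<lambda>X. Q (field c b X))"
    using assms(3,4) continuous_on_field continuous_on_compose2 by blast
  ultimately show ?thesis
    using assms by (intro set_integral_pos_continuous_on_open) auto
qed

section \<open>The Galerkin matrices as bilinear forms\<close>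

lemma Mv_symmetric: "transpose (Mv \<rho>0 \<Omega> \<phi>) = Mv \<rho>0 \<Omega> \<phi>"
  by (simp add: Mv_def vec_eq_iff transpose_def inner_commute)

lemma MF_symmetric: "transpose (MF \<Omega> \<theta>) = MF \<Omega> \<theta>"
  by (simp add: MF_def vec_eq_iff transpose_def ddot_eq_inner inner_commute)

lemma MS_eq_compliance:
  assumes "\<mu> \<noteq> 0" "2 * \<mu> + 3 * lam \<noteq> 0" "\<forall>j X. transpose (\<psi> j X) = \<psi> j X"
  shows "MS \<mu> lam \<Omega> \<psi> = (\<chi> j j'. LINT X:\<Omega>|lborel. \<psi> j X \<bullet> compliance \<mu> lam (\<psi> j' X))"
  using assms by (simp add: MS_def ddot_eq_inner elast_inv_eq_compliance)

lemma MS_symmetric: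
  assumes "\<mu> \<noteq> 0" "2 * \<mu> + 3 * lam \<noteq> 0" "\<forall>j X. transpose (\<psi> j X) = \<psi> j X"
  shows "transpose (MS \<mu> lam \<Omega> \<psi>) = MS \<mu> lam \<Omega> \<psi>"
proof -
  have "A \<bullet> compliance \<mu> lam B = B \<bullet> compliance \<mu> lam A" for A B
    by (simp add: compliance_def inner_diff_right inner_mat_1 inner_commute)
  then show ?thesis
    using assms by (simp add: MS_eq_compliance vec_eq_iff transpose_def)
qed

lemma inner_Mv:
  assumes "\<forall>i i'. set_integrable lborel \<Omega> (\<lambda>X. \<phi> i X \<bullet> \<phi> i' X)"
  shows "set_integrable lborel \<Omega> (\<lambda>X. field a \<phi> X \<bullet> (\<rho>0 *\<^sub>R field b \<phi> X))"
    and "a \<bullet> (Mv \<rho>0 \<Omega> \<phi> *v b) = (LINT X:\<Omega>|lborel. field a \<phi> X \<bullet> (\<rho>0 *\<^sub>R field b \<phi> X))"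
proof -
  have int: "set_integrable lborel \<Omega> (\<lambda>X. \<phi> i X \<bullet> (\<rho>0 *\<^sub>R \<phi> j X))" for i j
    using assms by simp
  have eq: "field a \<phi> X \<bullet> (\<rho>0 *\<^sub>R field b \<phi> X) = field a \<phi> X \<bullet> field b (\<lambda>j Y. \<rho>0 *\<^sub>R \<phi> j Y) X" for X
    by (simp add: field_def [of b] scaleR_sum_right mult.commute)
  show "set_integrable lborel \<Omega> (\<lambda>X. field a \<phi> X \<bullet> (\<rho>0 *\<^sub>R field b \<phi> X))"
    using int eq by (rule set_integral_inner_fields)
  have "Mv \<rho>0 \<Omega> \<phi> = (\<chi> i j. LINT X:\<Omega>|lborel. \<phi> i X \<bullet> (\<rho>0 *\<^sub>R \<phi> j X))"
    by (simp add: Mv_def)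
  then show "a \<bullet> (Mv \<rho>0 \<Omega> \<phi> *v b) = (LINT X:\<Omega>|lborel. field a \<phi> X \<bullet> (\<rho>0 *\<^sub>R field b \<phi> X))"
    using set_integral_inner_fields(2) [OF int eq] by simp
qed

lemma inner_MS:
  assumes "\<mu> \<noteq> 0" "2 * \<mu> + 3 * lam \<noteq> 0" and sym: "\<forall>j X. transpose (\<psi> j X) = \<psi> j X"
    and "\<forall>j j'. set_integrable lborel \<Omega> (\<lambda>X. ddot (\<psi> j X) (elast_inv \<mu> lam (\<psi> j' X)))"
  shows "set_integrable lborel \<Omega> (\<lambda>X. ddot (field a \<psi> X) (elast_inv \<mu> lam (field b \<psi> X)))"
    and "a \<bullet> (MS \<mu> lam \<Omega> \<psi> *v b) =
      (LINT X:\<Omega>|lborel. ddot (field a \<psi> X) (elast_inv \<mu> lam (field b \<psi> X)))"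
proof -
  have int: "set_integrable lborel \<Omega> (\<lambda>X. \<psi> j X \<bullet> compliance \<mu> lam (\<psi> j' X))" for j j'
    using assms by (simp add: ddot_eq_inner elast_inv_eq_compliance)
  have eq: "ddot (field a \<psi> X) (elast_inv \<mu> lam (field b \<psi> X)) =
      field a \<psi> X \<bullet> field b (\<lambda>j Y. compliance \<mu> lam (\<psi> j Y)) X" for X
  proof -
    have "elast_inv \<mu> lam (field b \<psi> X) = compliance \<mu> lam (field b \<psi> X)"
      using assms(1,2) field_symmetric [OF sym [rule_format]] by (rule elast_inv_eq_compliance)
    then show ?thesis
      by (simp add: ddot_eq_inner field_def [of b] tensor_map_sum tensor_map_scaleR)
  qed
  show "set_integrable lborel \<Omega> (\<lambda>X. ddot (field a \<psi> X) (elast_inv \<mu> lam (field b \<psi> X)))"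
    using int eq by (rule set_integral_inner_fields)
  show "a \<bullet> (MS \<mu> lam \<Omega> \<psi> *v b) =
      (LINT X:\<Omega>|lborel. ddot (field a \<psi> X) (elast_inv \<mu> lam (field b \<psi> X)))"
    using set_integral_inner_fields(2) [OF int eq] assms by (simp add: MS_eq_compliance)
qed

lemma inner_MF:
  assumes "\<forall>l l'. set_integrable lborel \<Omega> (\<lambda>X. ddot (\<theta> l X) (\<theta> l' X))"
  shows "set_integrable lborel \<Omega> (\<lambda>X. ddot (field a \<theta> X) (field b \<theta> X))"
    and "a \<bullet> (MF \<Omega> \<theta> *v b) = (LINT X:\<Omega>|lborel. ddot (field a \<theta> X) (field b \<theta> X))"
  using set_integral_inner_fields [of lborel \<Omega> \<theta> \<theta> "\<lambda>X. ddot (field a \<theta> X) (field b \<theta> X)" a b]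
    assms [rule_format]
  by (simp_all add: MF_def ddot_eq_inner)

lemma inner_Zmat:
  assumes diff: "\<forall>i. \<forall>X\<in>\<Omega>. \<phi> i differentiable (at X)"
    and "\<forall>l i. set_integrable lborel \<Omega> (\<lambda>X. ddot (\<theta> l X) (Grad (\<phi> i) X))"
  shows "set_integrable lborel \<Omega> (\<lambda>X. ddot (field a \<theta> X) (Grad (field b \<phi>) X))"
    and "a \<bullet> (Zmat \<Omega> \<phi> \<theta> *v b) = (LINT X:\<Omega>|lborel. ddot (field a \<theta> X) (Grad (field b \<phi>) X))"
proof -
  have int: "set_integrable lborel \<Omega> (\<lambda>X. \<theta> l X \<bullet> Grad (\<phi> i) X)" for l i
    using assms(2) by (simp add: ddot_eq_inner)
  have eq: "ddot (field a \<theta> X) (Grad (field b \<phi>) X) = field a \<theta> X \<bullet> field b (\<lambda>i. Grad (\<phi> i)) X"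
    if "X \<in> \<Omega>" for X
    using diff that by (simp add: ddot_eq_inner Grad_field)
  show "set_integrable lborel \<Omega> (\<lambda>X. ddot (field a \<theta> X) (Grad (field b \<phi>) X))"
    using int eq by (rule set_integral_inner_fields)
  show "a \<bullet> (Zmat \<Omega> \<phi> \<theta> *v b) = (LINT X:\<Omega>|lborel. ddot (field a \<theta> X) (Grad (field b \<phi>) X))"
    using set_integral_inner_fields(2) [OF int eq] by (simp add: Zmat_def ddot_eq_inner)
qed

lemma inner_Gtau:
  assumes "\<forall>i k. set_integrable \<sigma> \<Sigma>N (\<lambda>X. \<phi> i X \<bullet> \<xi> k X)"
  shows "set_integrable \<sigma> \<Sigma>N (\<lambda>X. field a \<phi> X \<bullet> field b \<xi> X)"
    and "a \<bullet> (Gtau \<Sigma>N \<sigma> \<phi> \<xi> *v b) = (LINT X:\<Sigma>N|\<sigma>. field a \<phi> X \<bullet> field b \<xi> X)"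
  using set_integral_inner_fields [of \<sigma> \<Sigma>N \<phi> \<xi> "\<lambda>X. field a \<phi> X \<bullet> field b \<xi> X" a b]
    assms [rule_format]
  by (simp_all add: Gtau_def)

lemma inner_Gnu:
  assumes "\<forall>l j m. set_integrable \<sigma> \<Sigma>D (\<lambda>X. ((\<theta> l X ** \<psi> j X) *v N X) \<bullet> \<zeta> m X)"
  shows "set_integrable \<sigma> \<Sigma>D (\<lambda>X. ((field F \<theta> X ** field a \<psi> X) *v N X) \<bullet> field b \<zeta> X)"
    and "a \<bullet> (Gnu \<Sigma>D \<sigma> N \<psi> \<theta> \<zeta> F *v b) =
      (LINT X:\<Sigma>D|\<sigma>. ((field F \<theta> X ** field a \<psi> X) *v N X) \<bullet> field b \<zeta> X)"
proof -
  have int: "set_integrable \<sigma> \<Sigma>D (\<lambda>X. ((field F \<theta> X ** \<psi> j X) *v N X) \<bullet> \<zeta> m X)" for j m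
    using assms [rule_format]
    by (rule set_integrable_inner_field [where f = "\<lambda>l X. (\<theta> l X ** \<psi> j X) *v N X" and h = "\<zeta> m" and c = F])
      (simp add: field_def [of F] tensor_map_sum tensor_map_scaleR)
  have eq: "((field F \<theta> X ** field a \<psi> X) *v N X) \<bullet> field b \<zeta> X =
      field a (\<lambda>j Y. (field F \<theta> Y ** \<psi> j Y) *v N Y) X \<bullet> field b \<zeta> X" for X
    by (simp add: field_def [of a] tensor_map_sum tensor_map_scaleR)
  show "set_integrable \<sigma> \<Sigma>D (\<lambda>X. ((field F \<theta> X ** field a \<psi> X) *v N X) \<bullet> field b \<zeta> X)"
    using int eq by (rule set_integral_inner_fields)
  show "a \<bullet> (Gnu \<Sigma>D \<sigma> N \<psi> \<theta> \<zeta> F *v b) =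
      (LINT X:\<Sigma>D|\<sigma>. ((field F \<theta> X ** field a \<psi> X) *v N X) \<bullet> field b \<zeta> X)"
    using set_integral_inner_fields(2) [OF int eq] by (simp add: Gnu_def)
qed

lemma inner_Kmat:
  assumes diff: "\<forall>i. \<forall>X\<in>\<Omega>. \<phi> i differentiable (at X)"
    and int_vol: "\<forall>i l j. set_integrable lborel \<Omega> (\<lambda>X. ddot (transpose (Grad (\<phi> i) X) ** \<theta> l X) (\<psi> j X))"
    and int_bdry: "\<forall>i l j. set_integrable \<sigma> \<Sigma>D (\<lambda>X. \<phi> i X \<bullet> ((\<theta> l X ** \<psi> j X) *v N X))"
  shows "set_integrable lborel \<Omega> (\<lambda>X. ddot (transpose (Grad (field a \<phi>) X) ** field F \<theta> X) (field b \<psi> X))"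
    and "set_integrable \<sigma> \<Sigma>D (\<lambda>X. field a \<phi> X \<bullet> ((field F \<theta> X ** field b \<psi> X) *v N X))"
    and "a \<bullet> (Kmat \<Omega> \<Sigma>D \<sigma> N \<phi> \<psi> \<theta> F *v b) =
      (LINT X:\<Omega>|lborel. ddot (transpose (Grad (field a \<phi>) X) ** field F \<theta> X) (field b \<psi> X))
      - (LINT X:\<Sigma>D|\<sigma>. field a \<phi> X \<bullet> ((field F \<theta> X ** field b \<psi> X) *v N X))"
proof -
  let ?f = "\<lambda>i X. transpose (Grad (\<phi> i) X) ** field F \<theta> X"
  let ?g = "\<lambda>j X. (field F \<theta> X ** \<psi> j X) *v N X"
  have int_f: "set_integrable lborel \<Omega> (\<lambda>X. ?f i X \<bullet> \<psi> j X)" for i j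
    using int_vol [rule_format, unfolded ddot_eq_inner]
    by (rule set_integrable_inner_field
          [where f = "\<lambda>l X. transpose (Grad (\<phi> i) X) ** \<theta> l X" and h = "\<psi> j" and c = F])
      (simp add: field_def [of F] tensor_map_sum tensor_map_scaleR)
  have int_g: "set_integrable \<sigma> \<Sigma>D (\<lambda>X. \<phi> i X \<bullet> ?g j X)" for i j
    using int_bdry [rule_format, unfolded inner_commute [of "\<phi> _ _"]]
    by (rule set_integrable_inner_field [where f = "\<lambda>l X. (\<theta> l X ** \<psi> j X) *v N X" and c = F])
      (simp add: field_def [of F] tensor_map_sum tensor_map_scaleR inner_commute)
  have eq_f: "ddot (transpose (Grad (field a \<phi>) X) ** field F \<theta> X) (field b \<psi> X) =
      field a ?f X \<bullet> field b \<psi> X" if "X \<in> \<Omega>" for X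
    using diff that
    by (simp add: ddot_eq_inner Grad_field field_def [of a] tensor_map_sum tensor_map_scaleR)
  have eq_g: "field a \<phi> X \<bullet> ((field F \<theta> X ** field b \<psi> X) *v N X) = field a \<phi> X \<bullet> field b ?g X" for X
    by (simp add: field_def [of b] tensor_map_sum tensor_map_scaleR)
  have "Kmat \<Omega> \<Sigma>D \<sigma> N \<phi> \<psi> \<theta> F =
      (\<chi> i j. LINT X:\<Omega>|lborel. ?f i X \<bullet> \<psi> j X) - (\<chi> i j. LINT X:\<Sigma>D|\<sigma>. \<phi> i X \<bullet> ?g j X)"
    by (simp add: Kmat_def vec_eq_iff ddot_eq_inner)
  then show "a \<bullet> (Kmat \<Omega> \<Sigma>D \<sigma> N \<phi> \<psi> \<theta> F *v b) =
      (LINT X:\<Omega>|lborel. ddot (transpose (Grad (field a \<phi>) X) ** field F \<theta> X) (field b \<psi> X))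
      - (LINT X:\<Sigma>D|\<sigma>. field a \<phi> X \<bullet> ((field F \<theta> X ** field b \<psi> X) *v N X))"
    using set_integral_inner_fields(2) [OF int_f eq_f] set_integral_inner_fields(2) [OF int_g eq_g]
    by (simp add: matrix_vector_mult_diff_rdistrib inner_diff_right)
  show "set_integrable lborel \<Omega> (\<lambda>X. ddot (transpose (Grad (field a \<phi>) X) ** field F \<theta> X) (field b \<psi> X))"
    using int_f eq_f by (rule set_integral_inner_fields)
  show "set_integrable \<sigma> \<Sigma>D (\<lambda>X. field a \<phi> X \<bullet> ((field F \<theta> X ** field b \<psi> X) *v N X))"
    using int_g eq_g by (rule set_integral_inner_fields)
qed

lemma Mv_pos_definite:
  assumes "open \<Omega>" "\<rho>0 > 0" "lin_indep_on \<Omega> \<phi>" "\<forall>i. continuous_on \<Omega> (\<phi> i)"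
    and int: "\<forall>i i'. set_integrable lborel \<Omega> (\<lambda>X. \<phi> i X \<bullet> \<phi> i' X)"
    and "a \<noteq> 0"
  shows "0 < a \<bullet> (Mv \<rho>0 \<Omega> \<phi> *v a)"
proof -
  have "0 < (LINT X:\<Omega>|lborel. field a \<phi> X \<bullet> (\<rho>0 *\<^sub>R field a \<phi> X))"
  proof (rule set_integral_quadratic_field_pos [where Q = "\<lambda>y. y \<bullet> (\<rho>0 *\<^sub>R y)"])
    show "continuous_on UNIV (\<lambda>y. y \<bullet> (\<rho>0 *\<^sub>R y))"
      by (intro continuous_intros)
    show "0 \<le> y \<bullet> (\<rho>0 *\<^sub>R y)" for y
      using \<open>\<rho>0 > 0\<close> by simp
    show "0 < y \<bullet> (\<rho>0 *\<^sub>R y)" if "y \<noteq> 0" for y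
      using \<open>\<rho>0 > 0\<close> that by simp
  qed (use assms inner_Mv(1) [OF int] in auto)
  then show ?thesis
    by (simp add: inner_Mv(2) [OF int])
qed

lemma MF_pos_definite:
  assumes "open \<Omega>" "lin_indep_on \<Omega> \<theta>" "\<forall>l. continuous_on \<Omega> (\<theta> l)"
    and int: "\<forall>l l'. set_integrable lborel \<Omega> (\<lambda>X. ddot (\<theta> l X) (\<theta> l' X))"
    and "a \<noteq> 0"
  shows "0 < a \<bullet> (MF \<Omega> \<theta> *v a)"
proof -
  have "0 < (LINT X:\<Omega>|lborel. ddot (field a \<theta> X) (field a \<theta> X))"
  proof (rule set_integral_quadratic_field_pos [where Q = "\<lambda>y. ddot y y"])
    show "continuous_on UNIV (\<lambda>y. ddot y y)"
      unfolding ddot_eq_inner by (intro continuous_intros)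
  qed (use assms inner_MF(1) [OF int] in \<open>auto simp: ddot_eq_inner\<close>)
  then show ?thesis
    by (simp add: inner_MF(2) [OF int])
qed

lemma MS_pos_definite:
  assumes "open \<Omega>" "\<mu> > 0" "3 * lam + 2 * \<mu> > 0" and sym: "\<forall>j X. transpose (\<psi> j X) = \<psi> j X"
    and "lin_indep_on \<Omega> \<psi>" "\<forall>j. continuous_on \<Omega> (\<psi> j)"
    and int: "\<forall>j j'. set_integrable lborel \<Omega> (\<lambda>X. ddot (\<psi> j X) (elast_inv \<mu> lam (\<psi> j' X)))"
    and "a \<noteq> 0"
  shows "0 < a \<bullet> (MS \<mu> lam \<Omega> \<psi> *v a)"
proof -
  have lame: "\<mu> \<noteq> 0" "2 * \<mu> + 3 * lam \<noteq> 0"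
    using assms(2,3) by auto
  have compl: "elast_inv \<mu> lam (field a \<psi> X) = compliance \<mu> lam (field a \<psi> X)" for X
    using lame field_symmetric [OF sym [rule_format]] by (rule elast_inv_eq_compliance)
  note form = inner_MS [OF lame sym int, of a a, unfolded compl]
  have "0 < (LINT X:\<Omega>|lborel. ddot (field a \<psi> X) (compliance \<mu> lam (field a \<psi> X)))"
  proof (rule set_integral_quadratic_field_pos [where Q = "\<lambda>y. ddot y (compliance \<mu> lam y)"])
    show "continuous_on UNIV (\<lambda>y. ddot y (compliance \<mu> lam y))"
      unfolding ddot_eq_inner by (intro continuous_intros continuous_on_compliance)
    show pos: "0 < ddot y (compliance \<mu> lam y)" if "y \<noteq> 0" for y
      using assms(2,3) that by (rule ddot_compliance_pos)
    show "0 \<le> ddot y (compliance \<mu> lam y)" for y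
      using pos [of y] by (cases "y = 0") (simp_all add: compliance_def ddot_def)
  qed (use assms form(1) in auto)
  then show ?thesis
    by (simp add: form(2))
qed

section \<open>The discretised weak form as a port-Hamiltonian system\<close>

lemma weak_momentum_eq:
  assumes diff: "\<forall>i. \<forall>X\<in>\<Omega>. \<phi> i differentiable (at X)"
    and int_phi: "\<forall>i i'. set_integrable lborel \<Omega> (\<lambda>X. \<phi> i X \<bullet> \<phi> i' X)"
    and int_vol: "\<forall>i l j. set_integrable lborel \<Omega> (\<lambda>X. ddot (transpose (Grad (\<phi> i) X) ** \<theta> l X) (\<psi> j X))"
    and int_bdry: "\<forall>i l j. set_integrable \<sigma> \<Sigma>D (\<lambda>X. \<phi> i X \<bullet> ((\<theta> l X ** \<psi> j X) *v N X))"
    and int_tau: "\<forall>i k. set_integrable \<sigma> \<Sigma>N (\<lambda>X. \<phi> i X \<bullet> \<xi> k X)"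
  shows "(LINT X:\<Omega>|lborel. field dv \<phi> X \<bullet> (\<rho>0 *\<^sub>R field vd \<phi> X)
            + ddot (transpose (Grad (field dv \<phi>) X) ** field F \<theta> X) (field S \<psi> X))
       - (LINT X:\<Sigma>D|\<sigma>. field dv \<phi> X \<bullet> ((field F \<theta> X ** field S \<psi> X) *v N X))
       - (LINT X:\<Sigma>N|\<sigma>. field dv \<phi> X \<bullet> field tau \<xi> X)
     = dv \<bullet> (Mv \<rho>0 \<Omega> \<phi> *v vd + Kmat \<Omega> \<Sigma>D \<sigma> N \<phi> \<psi> \<theta> F *v S - Gtau \<Sigma>N \<sigma> \<phi> \<xi> *v tau)"
proof -
  note K = inner_Kmat [OF diff int_vol int_bdry]
  have "dv \<bullet> (Mv \<rho>0 \<Omega> \<phi> *v vd + Kmat \<Omega> \<Sigma>D \<sigma> N \<phi> \<psi> \<theta> F *v S - Gtau \<Sigma>N \<sigma> \<phi> \<xi> *v tau)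
      = dv \<bullet> (Mv \<rho>0 \<Omega> \<phi> *v vd) + dv \<bullet> (Kmat \<Omega> \<Sigma>D \<sigma> N \<phi> \<psi> \<theta> F *v S)
        - dv \<bullet> (Gtau \<Sigma>N \<sigma> \<phi> \<xi> *v tau)"
    by (simp add: inner_add_right inner_diff_right)
  also have "\<dots> = (LINT X:\<Omega>|lborel. field dv \<phi> X \<bullet> (\<rho>0 *\<^sub>R field vd \<phi> X))
      + ((LINT X:\<Omega>|lborel. ddot (transpose (Grad (field dv \<phi>) X) ** field F \<theta> X) (field S \<psi> X))
         - (LINT X:\<Sigma>D|\<sigma>. field dv \<phi> X \<bullet> ((field F \<theta> X ** field S \<psi> X) *v N X)))
      - (LINT X:\<Sigma>N|\<sigma>. field dv \<phi> X \<bullet> field tau \<xi> X)"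
    by (simp only: inner_Mv(2) [OF int_phi] K(3) inner_Gtau(2) [OF int_tau])
  finally show ?thesis
    by (simp only: set_integral_add(2) [OF inner_Mv(1) [OF int_phi] K(1)])
qed

lemma weak_constitutive_eq:
  assumes lame: "\<mu> \<noteq> 0" "2 * \<mu> + 3 * lam \<noteq> 0" and sym: "\<forall>j X. transpose (\<psi> j X) = \<psi> j X"
    and diff: "\<forall>i. \<forall>X\<in>\<Omega>. \<phi> i differentiable (at X)"
    and int_psi: "\<forall>j j'. set_integrable lborel \<Omega> (\<lambda>X. ddot (\<psi> j X) (elast_inv \<mu> lam (\<psi> j' X)))"
    and int_vol: "\<forall>i l j. set_integrable lborel \<Omega> (\<lambda>X. ddot (transpose (Grad (\<phi> i) X) ** \<theta> l X) (\<psi> j X))"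
    and int_bdry: "\<forall>i l j. set_integrable \<sigma> \<Sigma>D (\<lambda>X. \<phi> i X \<bullet> ((\<theta> l X ** \<psi> j X) *v N X))"
    and int_nu: "\<forall>l j m. set_integrable \<sigma> \<Sigma>D (\<lambda>X. ((\<theta> l X ** \<psi> j X) *v N X) \<bullet> \<zeta> m X)"
  shows "(LINT X:\<Omega>|lborel. ddot (field dS \<psi> X) (elast_inv \<mu> lam (field Sd \<psi> X))
            - ddot (field dS \<psi> X) (transpose (field F \<theta> X) ** Grad (field v \<phi>) X))
       + (LINT X:\<Sigma>D|\<sigma>. ((field F \<theta> X ** field dS \<psi> X) *v N X) \<bullet> field v \<phi> X)
       - (LINT X:\<Sigma>D|\<sigma>. ((field F \<theta> X ** field dS \<psi> X) *v N X) \<bullet> field nu \<zeta> X)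
     = dS \<bullet> (MS \<mu> lam \<Omega> \<psi> *v Sd - transpose (Kmat \<Omega> \<Sigma>D \<sigma> N \<phi> \<psi> \<theta> F) *v v
              - Gnu \<Sigma>D \<sigma> N \<psi> \<theta> \<zeta> F *v nu)"
proof -
  note K = inner_Kmat [OF diff int_vol int_bdry]
  have swap: "ddot (field dS \<psi> X) (transpose (field F \<theta> X) ** Grad (field v \<phi>) X) =
      ddot (transpose (Grad (field v \<phi>) X) ** field F \<theta> X) (field dS \<psi> X)" for X
    using field_symmetric [OF sym [rule_format]] by (rule ddot_symmetric_transpose_mult)
  have "dS \<bullet> (MS \<mu> lam \<Omega> \<psi> *v Sd - transpose (Kmat \<Omega> \<Sigma>D \<sigma> N \<phi> \<psi> \<theta> F) *v v
          - Gnu \<Sigma>D \<sigma> N \<psi> \<theta> \<zeta> F *v nu)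
      = dS \<bullet> (MS \<mu> lam \<Omega> \<psi> *v Sd) - v \<bullet> (Kmat \<Omega> \<Sigma>D \<sigma> N \<phi> \<psi> \<theta> F *v dS)
        - dS \<bullet> (Gnu \<Sigma>D \<sigma> N \<psi> \<theta> \<zeta> F *v nu)"
    by (simp only: inner_diff_right inner_transpose_matrix_vector_mult)
  also have "\<dots> = (LINT X:\<Omega>|lborel. ddot (field dS \<psi> X) (elast_inv \<mu> lam (field Sd \<psi> X)))
      - ((LINT X:\<Omega>|lborel. ddot (transpose (Grad (field v \<phi>) X) ** field F \<theta> X) (field dS \<psi> X))
         - (LINT X:\<Sigma>D|\<sigma>. field v \<phi> X \<bullet> ((field F \<theta> X ** field dS \<psi> X) *v N X)))
      - (LINT X:\<Sigma>D|\<sigma>. ((field F \<theta> X ** field dS \<psi> X) *v N X) \<bullet> field nu \<zeta> X)"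
    by (simp only: inner_MS(2) [OF lame sym int_psi] K(3) inner_Gnu(2) [OF int_nu])
  finally show ?thesis
    by (simp only: swap inner_commute [of "field v \<phi> _"]
        set_integral_diff(2) [OF inner_MS(1) [OF lame sym int_psi] K(1)])
qed

lemma weak_kinematic_eq:
  assumes diff: "\<forall>i. \<forall>X\<in>\<Omega>. \<phi> i differentiable (at X)"
    and int_theta: "\<forall>l l'. set_integrable lborel \<Omega> (\<lambda>X. ddot (\<theta> l X) (\<theta> l' X))"
    and int_grad: "\<forall>l i. set_integrable lborel \<Omega> (\<lambda>X. ddot (\<theta> l X) (Grad (\<phi> i) X))"
  shows "(LINT X:\<Omega>|lborel. ddot (field dT \<theta> X) (field Fd \<theta> X) - ddot (field dT \<theta> X) (Grad (field v \<phi>) X))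
     = dT \<bullet> (MF \<Omega> \<theta> *v Fd - Zmat \<Omega> \<phi> \<theta> *v v)"
  by (simp only: inner_diff_right inner_MF(2) [OF int_theta] inner_Zmat(2) [OF diff int_grad]
      set_integral_diff(2) [OF inner_MF(1) [OF int_theta] inner_Zmat(1) [OF diff int_grad]])

lemma state_equation_iff:
  "block33 A 0 0 0 B 0 0 0 C *v stack3 v' S' F'
     = block33 0 (- K) (- transpose Z) (transpose K) 0 0 Z 0 0 *v stack3 v S 0
       + block32 G 0 0 H 0 0 *v stack2 tau nu
   \<longleftrightarrow> A *v v' + K *v S - G *v tau = 0 \<and> B *v S' - transpose K *v v - H *v nu = 0
       \<and> C *v F' - Z *v v = 0"
  by (simp add: block33_mult_stack3 block32_mult_stack2 stack3_add stack3_eq_iff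
      uminus_matrix_vector_mult algebra_simps)

lemma inner_all_zero_iff:
  "(\<forall>a b c. a \<bullet> r = 0 \<and> b \<bullet> s = 0 \<and> c \<bullet> u = 0) \<longleftrightarrow> r = 0 \<and> s = 0 \<and> u = 0"
  by (metis inner_eq_zero_iff inner_zero_right)

lemma quadratic_form_has_real_derivative:
  fixes x :: "real \<Rightarrow> real^'n" and A :: "real^'n^'n"
  assumes "transpose A = A" and x: "(x has_vector_derivative x') (at t)"
  shows "((\<lambda>s. (1/2) * (x s \<bullet> (A *v x s))) has_real_derivative x t \<bullet> (A *v x')) (at t)"
proof -
  have "((\<lambda>s. A *v x s) has_vector_derivative A *v x') (at t)"
    by (rule bounded_linear.has_vector_derivative [OF matrix_vector_mul_bounded_linear x])
  then have "((\<lambda>s. x s \<bullet> (A *v x s)) has_real_derivative x t \<bullet> (A *v x') + x' \<bullet> (A *v x t)) (at t)"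
    unfolding has_real_derivative_iff_has_vector_derivative
    by (rule bounded_bilinear.has_vector_derivative [OF bounded_bilinear_inner x])
  moreover have "x' \<bullet> (A *v x t) = x t \<bullet> (A *v x')"
    using inner_transpose_matrix_vector_mult [of x' A "x t"] assms(1) by simp
  ultimately show ?thesis
    using DERIV_cmult [where c = "1/2"] by fastforce
qed

lemma port_hamiltonian_power_balance:
  assumes "transpose A = A" "transpose B = B"
    and "vh differentiable (at t)" "Sh differentiable (at t)"
    and "block33 A 0 0 0 B 0 0 0 C *v stack3 (vector_derivative vh (at t)) (vector_derivative Sh (at t)) F'
       = block33 0 (- K) (- transpose Z) (transpose K) 0 0 Z 0 0 *v stack3 (vh t) (Sh t) 0
         + block32 G 0 0 H 0 0 *v stack2 tau nu"
  shows "((\<lambda>s. (1/2) * (vh s \<bullet> (A *v vh s)) + (1/2) * (Sh s \<bullet> (B *v Sh s)))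
      has_real_derivative (vh t \<bullet> (G *v tau) + Sh t \<bullet> (H *v nu))) (at t)"
proof -
  define v' where "v' = vector_derivative vh (at t)"
  define S' where "S' = vector_derivative Sh (at t)"
  from assms(5) have "A *v v' + K *v Sh t - G *v tau = 0" "B *v S' - transpose K *v vh t - H *v nu = 0"
    unfolding state_equation_iff v'_def S'_def by auto
  then have "A *v v' = G *v tau - K *v Sh t" "B *v S' = transpose K *v vh t + H *v nu"
    by (simp_all add: algebra_simps)
  then have balance: "vh t \<bullet> (A *v v') + Sh t \<bullet> (B *v S') = vh t \<bullet> (G *v tau) + Sh t \<bullet> (H *v nu)"
    using inner_transpose_matrix_vector_mult [of "Sh t" K "vh t"]
    by (simp add: inner_add_right inner_diff_right)
  have "(vh has_vector_derivative v') (at t)" "(Sh has_vector_derivative S') (at t)"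
    using assms(3,4) by (simp_all add: v'_def S'_def vector_derivative_works [symmetric])
  then show ?thesis
    by (intro DERIV_cong [OF DERIV_add balance] quadratic_form_has_real_derivative assms(1,2))
qed

lemma output_inner_input:
  "vh \<bullet> (G *v tau) + Sh \<bullet> (H *v nu)
     = (block23 (transpose G) 0 (0 :: real^'f^'k) 0 (transpose H) (0 :: real^'f^'m)
          *v stack3 vh Sh (0 :: real^'f)) \<bullet> stack2 (tau :: real^'k) (nu :: real^'m)"
  by (simp add: block23_mult_stack3 inner_stack2 dot_lmul_matrix)

theorem theorem2:
  fixes \<Omega> \<Sigma>D \<Sigma>N :: "(real^3) set"
    and N :: "real^3 \<Rightarrow> real^3"
    and \<sigma> :: "(real^3) measure"
    and \<rho>0 \<mu> lam :: real
    and \<phi> :: "'v::finite \<Rightarrow> real^3 \<Rightarrow> real^3"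
    and \<psi> :: "'s::finite \<Rightarrow> real^3 \<Rightarrow> real^3^3"
    and \<theta> :: "'f::finite \<Rightarrow> real^3 \<Rightarrow> real^3^3"
    and \<xi> :: "'k::finite \<Rightarrow> real^3 \<Rightarrow> real^3"
    and \<zeta> :: "'m::finite \<Rightarrow> real^3 \<Rightarrow> real^3"
    and tI :: "real set"
    and vh :: "real \<Rightarrow> real^'v" and Sh :: "real \<Rightarrow> real^'s" and Fh :: "real \<Rightarrow> real^'f"
    and tauh :: "real \<Rightarrow> real^'k" and nuh :: "real \<Rightarrow> real^'m"
  assumes dom: "lipschitz_domain \<Omega>" "bounded \<Omega>"
    and split: "\<Sigma>D \<union> \<Sigma>N = frontier \<Omega>" "\<Sigma>D \<inter> \<Sigma>N = {}"
    and surf: "\<Sigma>D \<in> sets \<sigma>" "\<Sigma>N \<in> sets \<sigma>"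
    and normal: "\<forall>X\<in>frontier \<Omega>. norm (N X) = 1"
    and params: "\<rho>0 > 0" "\<mu> > 0" "3 * lam + 2 * \<mu> > 0"
    and psi_sym: "\<forall>j X. transpose (\<psi> j X) = \<psi> j X"
    and reg_phi: "\<forall>i. continuous_on \<Omega> (\<phi> i) \<and> (\<forall>X\<in>\<Omega>. \<phi> i differentiable (at X))"
    and reg_psi: "\<forall>j. continuous_on \<Omega> (\<psi> j)"
    and reg_theta: "\<forall>l. continuous_on \<Omega> (\<theta> l)"
    and indep: "lin_indep_on \<Omega> \<phi>" "lin_indep_on \<Omega> \<psi>" "lin_indep_on \<Omega> \<theta>"
    and integrable:
      "\<forall>i i'. set_integrable lborel \<Omega> (\<lambda>X. \<phi> i X \<bullet> \<phi> i' X)"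
      "\<forall>j j'. set_integrable lborel \<Omega> (\<lambda>X. ddot (\<psi> j X) (elast_inv \<mu> lam (\<psi> j' X)))"
      "\<forall>l l'. set_integrable lborel \<Omega> (\<lambda>X. ddot (\<theta> l X) (\<theta> l' X))"
      "\<forall>l i. set_integrable lborel \<Omega> (\<lambda>X. ddot (\<theta> l X) (Grad (\<phi> i) X))"
      "\<forall>i l j. set_integrable lborel \<Omega> (\<lambda>X. ddot (transpose (Grad (\<phi> i) X) ** \<theta> l X) (\<psi> j X))"
      "\<forall>i l j. set_integrable \<sigma> \<Sigma>D (\<lambda>X. \<phi> i X \<bullet> ((\<theta> l X ** \<psi> j X) *v N X))"
      "\<forall>i k. set_integrable \<sigma> \<Sigma>N (\<lambda>X. \<phi> i X \<bullet> \<xi> k X)"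
      "\<forall>l j m. set_integrable \<sigma> \<Sigma>D (\<lambda>X. ((\<theta> l X ** \<psi> j X) *v N X) \<bullet> \<zeta> m X)"
    and time: "open tI"
      "\<forall>t\<in>tI. vh differentiable (at t) \<and> Sh differentiable (at t) \<and> Fh differentiable (at t)"
  shows
    \<comment> \<open>mass matrix symmetric positive definite\<close>
    "transpose (block33 (Mv \<rho>0 \<Omega> \<phi>) 0 0 0 (MS \<mu> lam \<Omega> \<psi>) 0 0 0 (MF \<Omega> \<theta>))
        = block33 (Mv \<rho>0 \<Omega> \<phi>) 0 0 0 (MS \<mu> lam \<Omega> \<psi>) 0 0 0 (MF \<Omega> \<theta>)
     \<and> (\<forall>x. x \<noteq> 0 \<longrightarrow>
          x \<bullet> (block33 (Mv \<rho>0 \<Omega> \<phi>) 0 0 0 (MS \<mu> lam \<Omega> \<psi>) 0 0 0 (MF \<Omega> \<theta>) *v x) > 0)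
     \<comment> \<open>structure matrix skew-symmetric\<close>
     \<and> (\<forall>Fc. transpose (block33 0 (- Kmat \<Omega> \<Sigma>D \<sigma> N \<phi> \<psi> \<theta> Fc) (- transpose (Zmat \<Omega> \<phi> \<theta>))
                               (transpose (Kmat \<Omega> \<Sigma>D \<sigma> N \<phi> \<psi> \<theta> Fc)) 0 0
                               (Zmat \<Omega> \<phi> \<theta>) 0 0)
             = - block33 0 (- Kmat \<Omega> \<Sigma>D \<sigma> N \<phi> \<psi> \<theta> Fc) (- transpose (Zmat \<Omega> \<phi> \<theta>))
                               (transpose (Kmat \<Omega> \<Sigma>D \<sigma> N \<phi> \<psi> \<theta> Fc)) 0 0
                               (Zmat \<Omega> \<phi> \<theta>) 0 0)
     \<comment> \<open>discretised weak form (Galerkin) is the port-Hamiltonian state equation\<close>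
     \<and> (\<forall>t\<in>tI.
         (\<forall>dv :: real^'v. \<forall>dS :: real^'s. \<forall>dT :: real^'f.
            set_lebesgue_integral lborel \<Omega> (\<lambda>X.
                field dv \<phi> X \<bullet> (\<rho>0 *\<^sub>R tder (\<lambda>s. field (vh s) \<phi>) t X)
              + ddot (transpose (Grad (field dv \<phi>) X) ** field (Fh t) \<theta> X) (field (Sh t) \<psi> X))
            - set_lebesgue_integral \<sigma> \<Sigma>D (\<lambda>X.
                field dv \<phi> X \<bullet> ((field (Fh t) \<theta> X ** field (Sh t) \<psi> X) *v N X))
            - set_lebesgue_integral \<sigma> \<Sigma>N (\<lambda>X. field dv \<phi> X \<bullet> field (tauh t) \<xi> X) = 0
          \<and> set_lebesgue_integral lborel \<Omega> (\<lambda>X.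
                ddot (field dS \<psi> X) (elast_inv \<mu> lam (tder (\<lambda>s. field (Sh s) \<psi>) t X))
              - ddot (field dS \<psi> X) (transpose (field (Fh t) \<theta> X) ** Grad (field (vh t) \<phi>) X))
            + set_lebesgue_integral \<sigma> \<Sigma>D (\<lambda>X.
                ((field (Fh t) \<theta> X ** field dS \<psi> X) *v N X) \<bullet> field (vh t) \<phi> X)
            - set_lebesgue_integral \<sigma> \<Sigma>D (\<lambda>X.
                ((field (Fh t) \<theta> X ** field dS \<psi> X) *v N X) \<bullet> field (nuh t) \<zeta> X) = 0
          \<and> set_lebesgue_integral lborel \<Omega> (\<lambda>X.
                ddot (field dT \<theta> X) (tder (\<lambda>s. field (Fh s) \<theta>) t X)
              - ddot (field dT \<theta> X) (Grad (field (vh t) \<phi>) X)) = 0)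
       \<longleftrightarrow>
         block33 (Mv \<rho>0 \<Omega> \<phi>) 0 0 0 (MS \<mu> lam \<Omega> \<psi>) 0 0 0 (MF \<Omega> \<theta>)
           *v stack3 (vector_derivative vh (at t)) (vector_derivative Sh (at t)) (vector_derivative Fh (at t))
         = block33 0 (- Kmat \<Omega> \<Sigma>D \<sigma> N \<phi> \<psi> \<theta> (Fh t)) (- transpose (Zmat \<Omega> \<phi> \<theta>))
                   (transpose (Kmat \<Omega> \<Sigma>D \<sigma> N \<phi> \<psi> \<theta> (Fh t))) 0 0
                   (Zmat \<Omega> \<phi> \<theta>) 0 0
             *v stack3 (vh t) (Sh t) (0 :: real^'f)
           + block32 (Gtau \<Sigma>N \<sigma> \<phi> \<xi>) 0 0 (Gnu \<Sigma>D \<sigma> N \<psi> \<theta> \<zeta> (Fh t)) 0 0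
             *v stack2 (tauh t) (nuh t))
     \<comment> \<open>power balance along solutions of the state equation\<close>
     \<and> (\<forall>t\<in>tI.
         block33 (Mv \<rho>0 \<Omega> \<phi>) 0 0 0 (MS \<mu> lam \<Omega> \<psi>) 0 0 0 (MF \<Omega> \<theta>)
           *v stack3 (vector_derivative vh (at t)) (vector_derivative Sh (at t)) (vector_derivative Fh (at t))
         = block33 0 (- Kmat \<Omega> \<Sigma>D \<sigma> N \<phi> \<psi> \<theta> (Fh t)) (- transpose (Zmat \<Omega> \<phi> \<theta>))
                   (transpose (Kmat \<Omega> \<Sigma>D \<sigma> N \<phi> \<psi> \<theta> (Fh t))) 0 0
                   (Zmat \<Omega> \<phi> \<theta>) 0 0
             *v stack3 (vh t) (Sh t) (0 :: real^'f)
           + block32 (Gtau \<Sigma>N \<sigma> \<phi> \<xi>) 0 0 (Gnu \<Sigma>D \<sigma> N \<psi> \<theta> \<zeta> (Fh t)) 0 0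
             *v stack2 (tauh t) (nuh t)
       \<longrightarrow>
         ((\<lambda>s. (1/2) * (vh s \<bullet> (Mv \<rho>0 \<Omega> \<phi> *v vh s)) + (1/2) * (Sh s \<bullet> (MS \<mu> lam \<Omega> \<psi> *v Sh s)))
            has_real_derivative
              (vh t \<bullet> (Gtau \<Sigma>N \<sigma> \<phi> \<xi> *v tauh t) + Sh t \<bullet> (Gnu \<Sigma>D \<sigma> N \<psi> \<theta> \<zeta> (Fh t) *v nuh t))) (at t)
       \<and> vh t \<bullet> (Gtau \<Sigma>N \<sigma> \<phi> \<xi> *v tauh t) + Sh t \<bullet> (Gnu \<Sigma>D \<sigma> N \<psi> \<theta> \<zeta> (Fh t) *v nuh t)
         = (block23 (transpose (Gtau \<Sigma>N \<sigma> \<phi> \<xi>)) 0 (0 :: real^'f^'k)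
                    0 (transpose (Gnu \<Sigma>D \<sigma> N \<psi> \<theta> \<zeta> (Fh t))) (0 :: real^'f^'m)
              *v stack3 (vh t) (Sh t) (0 :: real^'f)) \<bullet> stack2 (tauh t) (nuh t))"
proof -
  have "open \<Omega>"
    using dom(1) by (simp add: lipschitz_domain_def)
  have diff: "\<forall>i. \<forall>X\<in>\<Omega>. \<phi> i differentiable (at X)" and cont: "\<forall>i. continuous_on \<Omega> (\<phi> i)"
    using reg_phi by auto
  have lame: "\<mu> \<noteq> 0" "2 * \<mu> + 3 * lam \<noteq> 0"
    using params by auto
  show ?thesis
    apply (intro conjI allI impI ballI)
    subgoal by (rule block33_diag_symmetric [OF Mv_symmetric MS_symmetric [OF lame psi_sym] MF_symmetric])
    subgoal
      using Mv_pos_definite [OF \<open>open \<Omega>\<close> params(1) indep(1) cont integrable(1)]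
        MS_pos_definite [OF \<open>open \<Omega>\<close> params(2,3) psi_sym indep(2) reg_psi integrable(2)]
        MF_pos_definite [OF \<open>open \<Omega>\<close> indep(3) reg_theta integrable(3)]
      by (rule block33_diag_pos_definite)
    subgoal by (rule block33_structure_skew)
    subgoal premises t for t
    proof -
      have d: "vh differentiable (at t)" "Sh differentiable (at t)" "Fh differentiable (at t)"
        using time(2) t by auto
      show ?thesis
        unfolding tder_field [OF d(1)] tder_field [OF d(2)] tder_field [OF d(3)]
          weak_momentum_eq [OF diff integrable(1,5,6,7)] weak_kinematic_eq [OF diff integrable(3,4)]
          weak_constitutive_eq [OF lame psi_sym diff integrable(2,5,6,8)]
          inner_all_zero_iff state_equation_iff ..
    qed
    subgoal premises prems for t
      using time(2) prems(1)
      by (intro port_hamiltonian_power_balance [OF Mv_symmetric MS_symmetric [OF lame psi_sym] _ _ prems(2)]) auto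
    subgoal by (rule output_inner_input)
    done
qed

end
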